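(* Let $G$ be an infinite vertex-transitive graph of degree $d$ with spectral measure $\nu$. Let $X$ be an invariant random process with $\mathbb E X_o=0$, $\mathbb E X_o^2<\infty$, whose covariance structure $c_X$ lies in $\ell^2(G)$. Then $\mu_X$ is absolutely continuous with respect to $\nu$.
   Context: The covariance structure is $c_X(v)=\mathrm{cov}(X_o,X_v)$, $o$ the root. An invariant random process has $\mathrm{Aut}(G)$-invariant joint law. With $A$ the adjacency operator and $\delta_v$ the indicator of $v$: $\nu$ is the unique finite Borel measure on $[-d,d]$ with $\langle A^k\delta_o,\delta_o\rangle=\int t^kd\nu$, and $\mu_X$ is the unique finite Borel measure on $[-d,d]$ with $\mathbb E[(A^kX)_oX_o]=\int t^kd\mu_X$ for all $k\ge0$, where $(A^kX)_v=\sum_w(A^k\delta_v)(w)X_w$. *)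

theory Defs
  imports "HOL-Probability.Probability"
begin

definition graph_automorphism :: "('v \<Rightarrow> 'v \<Rightarrow> bool) \<Rightarrow> ('v \<Rightarrow> 'v) \<Rightarrow> bool" where
  "graph_automorphism E g \<longleftrightarrow> bij g \<and> (\<forall>u v. E u v \<longleftrightarrow> E (g u) (g v))"

definition vertex_transitive :: "('v \<Rightarrow> 'v \<Rightarrow> bool) \<Rightarrow> bool" where
  "vertex_transitive E \<longleftrightarrow> (\<forall>u v. \<exists>g. graph_automorphism E g \<and> g u = v)"

definition regular_graph :: "('v \<Rightarrow> 'v \<Rightarrow> bool) \<Rightarrow> nat \<Rightarrow> bool" where
  "regular_graph E d \<longleftrightarrow> (\<forall>u v. E u v \<longrightarrow> E v u) \<and> (\<forall>v. \<not> E v v) \<and>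
     (\<forall>v. finite {w. E v w} \<and> card {w. E v w} = d)"

definition adj_op :: "('v \<Rightarrow> 'v \<Rightarrow> bool) \<Rightarrow> ('v \<Rightarrow> real) \<Rightarrow> ('v \<Rightarrow> real)" where
  "adj_op E f v = (\<Sum>w\<in>{w. E v w}. f w)"

definition adj_pow_delta :: "('v \<Rightarrow> 'v \<Rightarrow> bool) \<Rightarrow> nat \<Rightarrow> 'v \<Rightarrow> ('v \<Rightarrow> real)" where
  "adj_pow_delta E k v = (adj_op E ^^ k) (\<lambda>w. if w = v then 1 else 0)"

definition proc_pow :: "('v \<Rightarrow> 'v \<Rightarrow> bool) \<Rightarrow> nat \<Rightarrow> ('v \<Rightarrow> 'a \<Rightarrow> real) \<Rightarrow> 'v \<Rightarrow> 'a \<Rightarrow> real" where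
  "proc_pow E k X v \<omega> = (\<Sum>w | adj_pow_delta E k v w \<noteq> 0. adj_pow_delta E k v w * X w \<omega>)"

definition invariant_process :: "'a measure \<Rightarrow> ('v \<Rightarrow> 'v \<Rightarrow> bool) \<Rightarrow> ('v \<Rightarrow> 'a \<Rightarrow> real) \<Rightarrow> bool" where
  "invariant_process M E X \<longleftrightarrow> (\<forall>v. X v \<in> borel_measurable M) \<and>
     (\<forall>g. graph_automorphism E g \<longrightarrow>
        distr M (Pi\<^sub>M UNIV (\<lambda>_. borel)) (\<lambda>\<omega> v. X (g v) \<omega>) =
        distr M (Pi\<^sub>M UNIV (\<lambda>_. borel)) (\<lambda>\<omega> v. X v \<omega>))"

definition cov_struct :: "'a measure \<Rightarrow> ('v \<Rightarrow> 'a \<Rightarrow> real) \<Rightarrow> 'v \<Rightarrow> 'v \<Rightarrow> real" where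
  "cov_struct M X v0 v = (\<integral>\<omega>. (X v0 \<omega> - (\<integral>\<omega>'. X v0 \<omega>' \<partial>M)) * (X v \<omega> - (\<integral>\<omega>'. X v \<omega>' \<partial>M)) \<partial>M)"

definition finite_borel_on :: "real measure \<Rightarrow> real \<Rightarrow> bool" where
  "finite_borel_on \<mu> r \<longleftrightarrow> finite_measure \<mu> \<and> sets \<mu> = sets borel \<and> emeasure \<mu> (UNIV - {-r..r}) = 0"

end

theory Submission
  imports Defs
begin

text \<open>
  For a polynomial \<open>p\<close>, the moment identities express \<open>\<integral>p d\<mu>\<close> as the inner product of
  \<open>q = p(A)\<delta>\<^sub>o\<close> with the covariance structure \<open>c\<close>, and \<open>\<integral>p\<^sup>2 d\<nu>\<close> as \<open>\<parallel>q\<parallel>\<^sup>2\<close>, because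
  \<open>A\<close> is self-adjoint. Cauchy--Schwarz therefore gives \<open>(\<integral>p d\<mu>)\<^sup>2 \<le> \<parallel>c\<parallel>\<^sup>2 \<integral>p\<^sup>2 d\<nu>\<close>.
  Both measures live on \<open>[-d, d]\<close>, so by Stone--Weierstrass and dominated convergence the
  inequality extends to continuous functions and then to indicators of compact sets; hence
  \<open>\<mu>\<close> vanishes on \<open>\<nu>\<close>-null compact sets, and by inner regularity on all \<open>\<nu>\<close>-null sets.
\<close>

section \<open>Powers of the adjacency operator\<close>

lemma adj_op_eq_sum_superset:
  assumes "finite {u. E w u}" "finite T" "{u. f u \<noteq> 0} \<subseteq> T"
  shows "adj_op E f w = (\<Sum>u\<in>T. if E w u then f u else 0)"
proof -
  have "(\<Sum>u\<in>T. if E w u then f u else 0) = (\<Sum>u\<in>{u\<in>T. E w u}. f u)"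
    by (simp add: sum.inter_filter assms(2))
  also have "\<dots> = (\<Sum>u\<in>{u. E w u}. f u)"
    by (rule sum.mono_neutral_left) (use assms in auto)
  finally show ?thesis by (simp add: adj_op_def)
qed

lemma adj_op_self_adjoint:
  assumes "regular_graph E d" "finite T" "{u. f u \<noteq> 0} \<subseteq> T" "{u. g u \<noteq> 0} \<subseteq> T"
  shows "(\<Sum>w\<in>T. adj_op E f w * g w) = (\<Sum>w\<in>T. f w * adj_op E g w)"
proof -
  have fin: "\<And>w. finite {u. E w u}" and sym: "\<And>u v. E u v \<Longrightarrow> E v u"
    using assms(1) by (auto simp: regular_graph_def)
  have "(\<Sum>w\<in>T. adj_op E f w * g w) = (\<Sum>w\<in>T. \<Sum>u\<in>T. if E w u then f u * g w else 0)"
    by (auto simp: adj_op_eq_sum_superset[OF fin assms(2,3)] sum_distrib_right intro!: sum.cong)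
  also have "\<dots> = (\<Sum>u\<in>T. \<Sum>w\<in>T. if E w u then f u * g w else 0)"
    by (rule sum.swap)
  also have "\<dots> = (\<Sum>u\<in>T. \<Sum>w\<in>T. if E u w then f u * g w else 0)"
    by (intro sum.cong refl) (auto dest: sym)
  also have "\<dots> = (\<Sum>w\<in>T. f w * adj_op E g w)"
    by (auto simp: adj_op_eq_sum_superset[OF fin assms(2,4)] sum_distrib_left intro!: sum.cong)
  finally show ?thesis .
qed

lemma adj_pow_delta_Suc: "adj_pow_delta E (Suc k) v = adj_op E (adj_pow_delta E k v)"
  by (simp add: adj_pow_delta_def)

lemma finite_support_adj_op:
  assumes "regular_graph E d" "finite {u. f u \<noteq> 0}"
  shows "finite {w. adj_op E f w \<noteq> 0}"
proof -
  have sym: "\<And>u v. E u v \<Longrightarrow> E v u" and fin: "\<And>w. finite {u. E w u}"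
    using assms(1) by (auto simp: regular_graph_def)
  have "{w. adj_op E f w \<noteq> 0} \<subseteq> (\<Union>u\<in>{u. f u \<noteq> 0}. {w. E u w})"
  proof
    fix w assume "w \<in> {w. adj_op E f w \<noteq> 0}"
    then have "(\<Sum>u\<in>{u. E w u}. f u) \<noteq> 0" by (simp add: adj_op_def)
    then obtain u where "E w u" "f u \<noteq> 0" using sum.neutral[of "{u. E w u}" f] by blast
    then show "w \<in> (\<Union>u\<in>{u. f u \<noteq> 0}. {w. E u w})" using sym by blast
  qed
  moreover have "finite (\<Union>u\<in>{u. f u \<noteq> 0}. {w. E u w})" using assms(2) fin by auto
  ultimately show ?thesis by (rule finite_subset)
qed

lemma finite_support_adj_pow_delta:
  assumes "regular_graph E d"
  shows "finite {w. adj_pow_delta E k v w \<noteq> 0}"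
  by (induction k)
     (simp_all add: adj_pow_delta_def[of E 0] adj_pow_delta_Suc finite_support_adj_op[OF assms])

text \<open>Since \<open>(A\<^sup>m\<delta>\<^sub>v)(w)\<close> counts walks from \<open>v\<close> to \<open>w\<close>, this is the ball of radius \<open>N\<close>
  about \<open>v\<close>; all that is used is that it is finite and contains these supports.\<close>

definition adj_pow_support :: "('v \<Rightarrow> 'v \<Rightarrow> bool) \<Rightarrow> 'v \<Rightarrow> nat \<Rightarrow> 'v set" where
  "adj_pow_support E v N = (\<Union>m\<le>N. {w. adj_pow_delta E m v w \<noteq> 0})"

lemma finite_adj_pow_support: "regular_graph E d \<Longrightarrow> finite (adj_pow_support E v N)"
  by (simp add: adj_pow_support_def finite_support_adj_pow_delta)

lemma support_adj_pow_delta_subset: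
  "m \<le> N \<Longrightarrow> {w. adj_pow_delta E m v w \<noteq> 0} \<subseteq> adj_pow_support E v N"
  by (auto simp: adj_pow_support_def)

lemma self_in_adj_pow_support: "v \<in> adj_pow_support E v N"
  using support_adj_pow_delta_subset[of 0 N E v] by (auto simp: adj_pow_delta_def)

lemma sum_adj_pow_delta_mult:
  assumes "regular_graph E d" "j + k \<le> N"
  shows "(\<Sum>w\<in>adj_pow_support E v N. adj_pow_delta E j v w * adj_pow_delta E k v w)
           = adj_pow_delta E (j + k) v v"
  using assms(2)
proof (induction j arbitrary: k)
  case 0
  have "(\<Sum>w\<in>adj_pow_support E v N. adj_pow_delta E 0 v w * adj_pow_delta E k v w)
      = (\<Sum>w\<in>adj_pow_support E v N. if w = v then adj_pow_delta E k v w else 0)"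
    by (intro sum.cong refl) (simp add: adj_pow_delta_def)
  also have "\<dots> = adj_pow_delta E k v v"
    using finite_adj_pow_support[OF assms(1)] self_in_adj_pow_support[of v E N] by simp
  finally show ?case by simp
next
  case (Suc j)
  have "(\<Sum>w\<in>adj_pow_support E v N. adj_pow_delta E (Suc j) v w * adj_pow_delta E k v w)
      = (\<Sum>w\<in>adj_pow_support E v N. adj_pow_delta E j v w * adj_pow_delta E (Suc k) v w)"
    unfolding adj_pow_delta_Suc
    by (rule adj_op_self_adjoint[OF assms(1) finite_adj_pow_support[OF assms(1)]];
        rule support_adj_pow_delta_subset; use Suc.prems in simp)
  also have "\<dots> = adj_pow_delta E (j + Suc k) v v" using Suc by simp
  finally show ?case by simp
qed

section \<open>Second moments of invariant processes\<close>

lemma invariant_process_measurable: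
  "invariant_process M E X \<Longrightarrow> X v \<in> borel_measurable M"
  by (simp add: invariant_process_def)

lemma invariant_process_distr_eq:
  assumes "invariant_process M E X" "vertex_transitive E"
  shows "distr M borel (X w) = distr M borel (X v)"
proof -
  obtain g where g: "graph_automorphism E g" "g v = w"
    using assms(2) by (auto simp: vertex_transitive_def)
  have joint: "distr M (Pi\<^sub>M UNIV (\<lambda>_. borel)) (\<lambda>\<omega> u. X (g u) \<omega>) =
        distr M (Pi\<^sub>M UNIV (\<lambda>_. borel)) (\<lambda>\<omega> u. X u \<omega>)"
    using assms(1) g(1) by (simp add: invariant_process_def)
  have meas_g: "(\<lambda>\<omega> u. X (g u) \<omega>) \<in> measurable M (Pi\<^sub>M UNIV (\<lambda>_. borel))"
    and meas: "(\<lambda>\<omega> u. X u \<omega>) \<in> measurable M (Pi\<^sub>M UNIV (\<lambda>_. borel))"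
    using invariant_process_measurable[OF assms(1)] by (simp_all add: measurable_abs_UNIV)
  have proj: "(\<lambda>x. x v) \<in> measurable (Pi\<^sub>M UNIV (\<lambda>_. borel)) borel"
    by (rule measurable_component_singleton) simp
  have "distr M borel (X w) = distr (distr M (Pi\<^sub>M UNIV (\<lambda>_. borel)) (\<lambda>\<omega> u. X (g u) \<omega>)) borel (\<lambda>x. x v)"
    using distr_distr[OF proj meas_g] g(2) by (simp add: comp_def)
  also have "\<dots> = distr M borel (X v)"
    unfolding joint using distr_distr[OF proj meas] by (simp add: comp_def)
  finally show ?thesis .
qed

lemma invariant_process_integrable_square:
  assumes "invariant_process M E X" "vertex_transitive E" "integrable M (\<lambda>\<omega>. (X v \<omega>)\<^sup>2)"
  shows "integrable M (\<lambda>\<omega>. (X w \<omega>)\<^sup>2)"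
proof -
  note meas = invariant_process_measurable[OF assms(1)]
  have "integrable (distr M borel (X v)) (\<lambda>x. x\<^sup>2)"
    using assms(3) integrable_distr_eq[of "X v" M borel "\<lambda>x. x\<^sup>2"] meas by simp
  then have "integrable (distr M borel (X w)) (\<lambda>x. x\<^sup>2)"
    by (simp add: invariant_process_distr_eq[OF assms(1,2), of w v])
  then show ?thesis
    using integrable_distr_eq[of "X w" M borel "\<lambda>x. x\<^sup>2"] meas by simp
qed

lemma invariant_process_integrable_mult:
  assumes "invariant_process M E X" "vertex_transitive E" "integrable M (\<lambda>\<omega>. (X v \<omega>)\<^sup>2)"
  shows "integrable M (\<lambda>\<omega>. X w \<omega> * X u \<omega>)"
proof (rule Bochner_Integration.integrable_bound)
  show "integrable M (\<lambda>\<omega>. (X w \<omega>)\<^sup>2 + (X u \<omega>)\<^sup>2)"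
    using invariant_process_integrable_square[OF assms] by simp
  show "(\<lambda>\<omega>. X w \<omega> * X u \<omega>) \<in> borel_measurable M"
    using invariant_process_measurable[OF assms(1)] by simp
  have "\<bar>x * y\<bar> \<le> x\<^sup>2 + y\<^sup>2" for x y :: real
    using sum_squares_bound[of "\<bar>x\<bar>" "\<bar>y\<bar>"] mult_nonneg_nonneg[OF abs_ge_zero abs_ge_zero, of x y]
    by (simp only: abs_mult power2_abs mult.assoc)
  then show "AE \<omega> in M. norm (X w \<omega> * X u \<omega>) \<le> norm ((X w \<omega>)\<^sup>2 + (X u \<omega>)\<^sup>2)"
    by simp
qed

lemma cov_struct_eq_integral_mult:
  assumes "invariant_process M E X" "vertex_transitive E" "integrable M (\<lambda>\<omega>. (X v0 \<omega>)\<^sup>2)"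
    and "prob_space M" "(\<integral>\<omega>. X v0 \<omega> \<partial>M) = 0"
  shows "cov_struct M X v0 w = (\<integral>\<omega>. X w \<omega> * X v0 \<omega> \<partial>M)"
proof -
  interpret prob_space M by (rule assms(4))
  have "integrable M (X u)" for u
    using square_integrable_imp_integrable[OF invariant_process_measurable[OF assms(1)]]
      invariant_process_integrable_square[OF assms(1-3)] by blast
  then have "cov_struct M X v0 w
      = (\<integral>\<omega>. X w \<omega> * X v0 \<omega> \<partial>M) - (\<integral>\<omega>. (\<integral>\<omega>'. X w \<omega>' \<partial>M) * X v0 \<omega> \<partial>M)"
    unfolding cov_struct_def assms(5)
    by (subst Bochner_Integration.integral_diff[symmetric])
       (auto intro: invariant_process_integrable_mult[OF assms(1-3)] simp: algebra_simps)
  then show ?thesis using assms(5) by simp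
qed

lemma integral_proc_pow_mult:
  assumes "invariant_process M E X" "vertex_transitive E" "integrable M (\<lambda>\<omega>. (X v0 \<omega>)\<^sup>2)"
    and "prob_space M" "(\<integral>\<omega>. X v0 \<omega> \<partial>M) = 0"
  shows "(\<integral>\<omega>. proc_pow E k X v0 \<omega> * X v0 \<omega> \<partial>M)
     = (\<Sum>w | adj_pow_delta E k v0 w \<noteq> 0. adj_pow_delta E k v0 w * cov_struct M X v0 w)"
proof -
  have "(\<integral>\<omega>. proc_pow E k X v0 \<omega> * X v0 \<omega> \<partial>M)
     = (\<integral>\<omega>. (\<Sum>w | adj_pow_delta E k v0 w \<noteq> 0. adj_pow_delta E k v0 w * (X w \<omega> * X v0 \<omega>)) \<partial>M)"
    unfolding proc_pow_def by (simp add: sum_distrib_right mult.assoc)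
  also have "\<dots> = (\<Sum>w | adj_pow_delta E k v0 w \<noteq> 0. adj_pow_delta E k v0 w * (\<integral>\<omega>. X w \<omega> * X v0 \<omega> \<partial>M))"
    by (subst Bochner_Integration.integral_sum)
       (auto intro: invariant_process_integrable_mult[OF assms(1-3)])
  finally show ?thesis by (simp add: cov_struct_eq_integral_mult[OF assms])
qed

lemma AE_finite_borel_on: "finite_borel_on m r \<Longrightarrow> AE t in m. t \<in> {-r..r}"
proof -
  assume m: "finite_borel_on m r"
  then have "space m = UNIV"
    unfolding finite_borel_on_def by (metis sets_eq_imp_space_eq space_borel)
  moreover have "UNIV - {-r..r} \<in> null_sets m"
    using m by (simp add: finite_borel_on_def null_sets_def)
  ultimately show ?thesis by (auto intro: AE_I')
qed

lemma measurable_finite_borel_on: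
  "finite_borel_on m r \<Longrightarrow> f \<in> borel_measurable borel \<Longrightarrow> f \<in> borel_measurable m"
  unfolding finite_borel_on_def by (metis measurable_cong_sets)

lemma integrable_finite_borel_on:
  fixes f :: "real \<Rightarrow> real"
  assumes "finite_borel_on m r" "f \<in> borel_measurable borel" "\<And>t. t \<in> {-r..r} \<Longrightarrow> \<bar>f t\<bar> \<le> B"
  shows "integrable m f"
proof -
  interpret finite_measure m using assms(1) by (simp add: finite_borel_on_def)
  show ?thesis
    by (rule integrable_const_bound[where B = B])
       (use AE_finite_borel_on[OF assms(1)] assms(3) measurable_finite_borel_on[OF assms(1,2)] in auto)
qed

lemma integrable_power_finite_borel_on: "finite_borel_on m r \<Longrightarrow> integrable m (\<lambda>t. t ^ k)"
  by (rule integrable_finite_borel_on[where B = "r ^ k"])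
     (auto simp: power_abs intro!: power_mono)

lemma tendsto_integral_finite_borel_on:
  fixes g :: "nat \<Rightarrow> real \<Rightarrow> real"
  assumes m: "finite_borel_on m r"
    and meas: "\<And>n. g n \<in> borel_measurable borel" "h \<in> borel_measurable borel"
    and lim: "\<And>t. t \<in> {-r..r} \<Longrightarrow> (\<lambda>n. g n t) \<longlonglongrightarrow> h t"
    and bound: "\<And>n t. t \<in> {-r..r} \<Longrightarrow> \<bar>g n t\<bar> \<le> B"
  shows "(\<lambda>n. \<integral>t. g n t \<partial>m) \<longlonglongrightarrow> (\<integral>t. h t \<partial>m)"
proof -
  interpret finite_measure m using m by (simp add: finite_borel_on_def)
  show ?thesis
  proof (rule integral_dominated_convergence[where w = "\<lambda>_. B"])
    show "h \<in> borel_measurable m" "g n \<in> borel_measurable m" for n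
      using measurable_finite_borel_on[OF m] meas by auto
    show "AE t in m. (\<lambda>n. g n t) \<longlonglongrightarrow> h t" "AE t in m. norm (g n t) \<le> B" for n
      using AE_finite_borel_on[OF m] lim bound by auto
  qed simp
qed

section \<open>From a polynomial moment bound to absolute continuity\<close>

lemma integral_sq_le_of_polynomial_bound:
  assumes \<mu>: "finite_borel_on \<mu> r" and \<nu>: "finite_borel_on \<nu> r"
    and poly: "\<And>p. real_polynomial_function p \<Longrightarrow> (\<integral>t. p t \<partial>\<mu>)\<^sup>2 \<le> C * (\<integral>t. (p t)\<^sup>2 \<partial>\<nu>)"
    and f: "continuous_on UNIV f"
  shows "(\<integral>t. f t \<partial>\<mu>)\<^sup>2 \<le> C * (\<integral>t. (f t)\<^sup>2 \<partial>\<nu>)"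
proof -
  have f_Icc: "continuous_on {-r..r} f" using continuous_on_subset[OF f] by simp
  obtain B where B: "\<And>t. t \<in> {-r..r} \<Longrightarrow> \<bar>f t\<bar> \<le> B"
    using continuous_on_compact_bound[OF compact_Icc f_Icc] by (metis real_norm_def)
  have "\<exists>p. real_polynomial_function p \<and> (\<forall>t\<in>{-r..r}. \<bar>f t - p t\<bar> < inverse (real (Suc n)))" for n
    by (rule Stone_Weierstrass_real_polynomial_function[OF compact_Icc f_Icc, of "inverse (real (Suc n))"])
       auto
  then obtain P where P: "\<And>n. real_polynomial_function (P n)"
    "\<And>n t. t \<in> {-r..r} \<Longrightarrow> \<bar>f t - P n t\<bar> < inverse (real (Suc n))" by metis
  have meas: "(\<lambda>t. P n t) \<in> borel_measurable borel" "f \<in> borel_measurable borel" for n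
    using P(1) f
    by (auto intro!: borel_measurable_continuous_onI continuous_on_polymonial_function
             simp: real_polynomial_function_eq)
  have lim: "(\<lambda>n. P n t) \<longlonglongrightarrow> f t" if "t \<in> {-r..r}" for t
  proof -
    have "(\<lambda>n. P n t - f t) \<longlonglongrightarrow> 0"
      by (rule Lim_null_comparison[OF _ LIMSEQ_inverse_real_of_nat])
         (use P(2)[OF that] in \<open>auto intro!: always_eventually simp: abs_minus_commute less_imp_le\<close>)
    then show ?thesis by (simp add: LIM_zero_iff)
  qed
  have bound: "\<bar>P n t\<bar> \<le> B + 1" if "t \<in> {-r..r}" for n t
    using P(2)[OF that, of n] B[OF that] inverse_le_1_iff[of "real (Suc n)"] by linarith
  have bound_sq: "\<bar>(P n t)\<^sup>2\<bar> \<le> (B + 1)\<^sup>2" if "t \<in> {-r..r}" for n t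
    using power_mono[OF bound[OF that, of n] abs_ge_zero, of 2] by (simp add: power_abs[symmetric])
  have "(\<lambda>n. (\<integral>t. P n t \<partial>\<mu>)\<^sup>2) \<longlonglongrightarrow> (\<integral>t. f t \<partial>\<mu>)\<^sup>2"
    by (intro tendsto_power tendsto_integral_finite_borel_on[OF \<mu> meas lim bound])
  moreover have "(\<lambda>n. C * (\<integral>t. (P n t)\<^sup>2 \<partial>\<nu>)) \<longlonglongrightarrow> C * (\<integral>t. (f t)\<^sup>2 \<partial>\<nu>)"
    by (intro tendsto_mult_left tendsto_integral_finite_borel_on[OF \<nu> _ _ _ bound_sq])
       (use meas lim in \<open>auto intro: tendsto_power\<close>)
  ultimately show ?thesis using poly[OF P(1)] by (intro LIMSEQ_le) auto
qed

lemma emeasure_compact_eq_0_of_polynomial_bound: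
  assumes \<mu>: "finite_borel_on \<mu> r" and \<nu>: "finite_borel_on \<nu> r"
    and poly: "\<And>p. real_polynomial_function p \<Longrightarrow> (\<integral>t. p t \<partial>\<mu>)\<^sup>2 \<le> C * (\<integral>t. (p t)\<^sup>2 \<partial>\<nu>)"
    and K: "compact K" "measure \<nu> K = 0"
  shows "emeasure \<mu> K = 0"
proof (cases "K = {}")
  case False
  interpret finite_measure \<mu> using \<mu> by (simp add: finite_borel_on_def)
  have space: "space \<mu> = UNIV" "space \<nu> = UNIV"
    using \<mu> \<nu> unfolding finite_borel_on_def by (metis sets_eq_imp_space_eq space_borel)+
  have closed: "closed K" using K(1) compact_imp_closed by blast
  define f where "f n t = max 0 (1 - real n * infdist t K)" for n t
  have f_cont: "continuous_on UNIV (f n)" for n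
    unfolding f_def by (intro continuous_intros)
  have f_bound: "\<bar>f n t\<bar> \<le> 1" "\<bar>(f n t)\<^sup>2\<bar> \<le> 1" for n t
    using infdist_nonneg[of t K] by (auto simp: f_def abs_square_le_1)
  have f_lim: "(\<lambda>n. f n t) \<longlonglongrightarrow> indicator K t" for t
  proof (cases "t \<in> K")
    case True
    then show ?thesis using in_closed_iff_infdist_zero[OF closed False] by (simp add: f_def)
  next
    case outside: False
    then have pos: "infdist t K > 0"
      using in_closed_iff_infdist_zero[OF closed False] infdist_nonneg[of t K] by auto
    obtain N where N: "1 < real N * infdist t K" using reals_Archimedean3[OF pos] by blast
    have "f n t = 0" if "N \<le> n" for n
    proof -
      have "real N * infdist t K \<le> real n * infdist t K"
        using pos that by (intro mult_right_mono) auto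
      then show ?thesis using N by (simp add: f_def)
    qed
    then have "(\<lambda>n. f n t) \<longlonglongrightarrow> 0" by (intro tendsto_eventually eventually_sequentiallyI)
    then show ?thesis using outside by simp
  qed
  have meas: "f n \<in> borel_measurable borel" "indicator K \<in> borel_measurable borel" for n
    using closed by (auto intro: borel_measurable_continuous_onI[OF f_cont])
  have "(\<lambda>n. (\<integral>t. f n t \<partial>\<mu>)\<^sup>2) \<longlonglongrightarrow> (\<integral>t. indicator K t \<partial>\<mu>)\<^sup>2"
    by (intro tendsto_power tendsto_integral_finite_borel_on[OF \<mu> meas f_lim f_bound(1)])
  moreover have "(\<lambda>n. C * (\<integral>t. (f n t)\<^sup>2 \<partial>\<nu>)) \<longlonglongrightarrow> C * (\<integral>t. (indicator K t)\<^sup>2 \<partial>\<nu>)"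
    by (intro tendsto_mult_left tendsto_integral_finite_borel_on[OF \<nu> _ _ _ f_bound(2)])
       (use meas f_lim in \<open>auto intro: tendsto_power borel_measurable_power\<close>)
  ultimately have "(\<integral>t. indicator K t \<partial>\<mu>)\<^sup>2 \<le> C * (\<integral>t. (indicator K t)\<^sup>2 \<partial>\<nu>)"
    using integral_sq_le_of_polynomial_bound[OF \<mu> \<nu> poly f_cont] by (intro LIMSEQ_le) auto
  moreover have "(\<lambda>t. (indicator K t :: real)\<^sup>2) = indicator K"
    by (auto simp: indicator_def)
  ultimately have "(measure \<mu> K)\<^sup>2 \<le> 0" using K(2) by (simp add: space)
  then show ?thesis by (simp add: emeasure_eq_measure)
qed simp

lemma absolutely_continuous_of_polynomial_bound:
  assumes \<mu>: "finite_borel_on \<mu> r" and \<nu>: "finite_borel_on \<nu> r"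
    and poly: "\<And>p. real_polynomial_function p \<Longrightarrow> (\<integral>t. p t \<partial>\<mu>)\<^sup>2 \<le> C * (\<integral>t. (p t)\<^sup>2 \<partial>\<nu>)"
  shows "absolutely_continuous \<nu> \<mu>"
  unfolding absolutely_continuous_def
proof
  interpret \<mu>: finite_measure \<mu> using \<mu> by (simp add: finite_borel_on_def)
  interpret \<nu>: finite_measure \<nu> using \<nu> by (simp add: finite_borel_on_def)
  have sets: "sets \<mu> = sets borel" "sets \<nu> = sets borel"
    using \<mu> \<nu> by (auto simp: finite_borel_on_def)
  fix B assume B: "B \<in> null_sets \<nu>"
  then have B_borel: "B \<in> sets borel" using sets by auto
  have compact_null: "emeasure \<mu> K \<le> 0" if "K \<subseteq> B" "compact K" for K
  proof -
    have "emeasure \<nu> K \<le> emeasure \<nu> B"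
      using that B sets(2) by (intro emeasure_mono) (auto intro: borel_closed compact_imp_closed)
    moreover have "emeasure \<nu> B = 0" using B by auto
    ultimately have "measure \<nu> K = 0"
      by (simp add: \<nu>.emeasure_eq_measure measure_nonneg antisym)
    then show ?thesis
      using emeasure_compact_eq_0_of_polynomial_bound[OF \<mu> \<nu> poly] that by simp
  qed
  have "emeasure \<mu> B = (SUP K \<in> {K. K \<subseteq> B \<and> compact K}. emeasure \<mu> K)"
    by (rule inner_regular[OF sets(1) _ B_borel]) simp
  also have "\<dots> \<le> 0"
    using compact_null by (intro SUP_least) auto
  finally show "B \<in> null_sets \<mu>" using B_borel sets(1) by auto
qed

lemma integral_polynomial_sq_le:
  fixes a :: "nat \<Rightarrow> 'v \<Rightarrow> real" and c :: "'v \<Rightarrow> real"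
  assumes \<mu>: "finite_borel_on \<mu> r" and \<nu>: "finite_borel_on \<nu> r" and T: "finite T"
    and \<nu>_moments: "\<And>i j. i \<le> n \<Longrightarrow> j \<le> n \<Longrightarrow> (\<integral>t. t ^ (i + j) \<partial>\<nu>) = (\<Sum>w\<in>T. a i w * a j w)"
    and \<mu>_moments: "\<And>i. i \<le> n \<Longrightarrow> (\<integral>t. t ^ i \<partial>\<mu>) = (\<Sum>w\<in>T. a i w * c w)"
  shows "(\<integral>t. (\<Sum>i\<le>n. b i * t ^ i) \<partial>\<mu>)\<^sup>2
           \<le> (\<Sum>w\<in>T. (c w)\<^sup>2) * (\<integral>t. (\<Sum>i\<le>n. b i * t ^ i)\<^sup>2 \<partial>\<nu>)"
proof -
  define q where "q w = (\<Sum>i\<le>n. b i * a i w)" for w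
  have "(\<integral>t. (\<Sum>i\<le>n. b i * t ^ i) \<partial>\<mu>) = (\<Sum>i\<le>n. b i * (\<Sum>w\<in>T. a i w * c w))"
    by (subst Bochner_Integration.integral_sum)
       (auto intro: integrable_power_finite_borel_on[OF \<mu>] simp: \<mu>_moments)
  also have "\<dots> = (\<Sum>w\<in>T. q w * c w)"
    by (simp add: q_def sum_distrib_left sum_distrib_right mult.assoc sum.swap[of _ T])
  finally have \<mu>_poly: "(\<integral>t. (\<Sum>i\<le>n. b i * t ^ i) \<partial>\<mu>) = (\<Sum>w\<in>T. q w * c w)" .
  have square: "(\<Sum>i\<le>n. b i * t ^ i)\<^sup>2 = (\<Sum>i\<le>n. \<Sum>j\<le>n. b i * b j * t ^ (i + j))" for t :: real
    by (simp add: power2_eq_square sum_product power_add algebra_simps)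
  have "(\<integral>t. (\<Sum>i\<le>n. b i * t ^ i)\<^sup>2 \<partial>\<nu>) = (\<Sum>i\<le>n. \<Sum>j\<le>n. b i * b j * (\<Sum>w\<in>T. a i w * a j w))"
    unfolding square
    by (subst Bochner_Integration.integral_sum,
        auto intro!: Bochner_Integration.integrable_sum integrable_power_finite_borel_on[OF \<nu>])
       (subst Bochner_Integration.integral_sum,
        auto intro!: integrable_power_finite_borel_on[OF \<nu>] simp: \<nu>_moments)
  also have "\<dots> = (\<Sum>w\<in>T. (q w)\<^sup>2)"
    by (simp add: q_def power2_eq_square sum_product sum_distrib_left sum.swap[of _ T] algebra_simps)
  finally have \<nu>_poly: "(\<integral>t. (\<Sum>i\<le>n. b i * t ^ i)\<^sup>2 \<partial>\<nu>) = (\<Sum>w\<in>T. (q w)\<^sup>2)" .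
  have "(\<Sum>w\<in>T. q w * c w)\<^sup>2 \<le> (\<Sum>w\<in>T. (q w)\<^sup>2) * (\<Sum>w\<in>T. (c w)\<^sup>2)"
    by (rule Cauchy_Schwarz_ineq_sum)
  then show ?thesis by (simp add: \<mu>_poly \<nu>_poly mult.commute)
qed

lemma spectral_polynomial_bound:
  assumes reg: "regular_graph E d"
    and \<mu>: "finite_borel_on \<mu> r" and \<nu>: "finite_borel_on \<nu> r"
    and \<nu>_moments: "\<And>k. (\<integral>t. t ^ k \<partial>\<nu>) = adj_pow_delta E k v v"
    and \<mu>_moments: "\<And>k. (\<integral>t. t ^ k \<partial>\<mu>) = (\<Sum>w | adj_pow_delta E k v w \<noteq> 0. adj_pow_delta E k v w * c w)"
    and c: "(\<lambda>w. (c w)\<^sup>2) summable_on UNIV"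
    and p: "real_polynomial_function p"
  shows "(\<integral>t. p t \<partial>\<mu>)\<^sup>2 \<le> (\<Sum>\<^sub>\<infinity>w. (c w)\<^sup>2) * (\<integral>t. (p t)\<^sup>2 \<partial>\<nu>)"
proof -
  obtain b n where p_eq: "p = (\<lambda>t. \<Sum>i\<le>n. b i * t ^ i)"
    using p real_polynomial_function_iff_sum by blast
  define T where "T = adj_pow_support E v (2 * n)"
  have T: "finite T" using finite_adj_pow_support[OF reg] by (simp add: T_def)
  have "(\<integral>t. p t \<partial>\<mu>)\<^sup>2 \<le> (\<Sum>w\<in>T. (c w)\<^sup>2) * (\<integral>t. (p t)\<^sup>2 \<partial>\<nu>)"
    unfolding p_eq
  proof (rule integral_polynomial_sq_le[OF \<mu> \<nu> T])
    show "(\<integral>t. t ^ (i + j) \<partial>\<nu>) = (\<Sum>w\<in>T. adj_pow_delta E i v w * adj_pow_delta E j v w)"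
      if "i \<le> n" "j \<le> n" for i j
      using that by (simp add: \<nu>_moments T_def sum_adj_pow_delta_mult[OF reg])
    show "(\<integral>t. t ^ i \<partial>\<mu>) = (\<Sum>w\<in>T. adj_pow_delta E i v w * c w)" if "i \<le> n" for i
      unfolding \<mu>_moments T_def
      by (rule sum.mono_neutral_left)
         (use finite_adj_pow_support[OF reg] support_adj_pow_delta_subset[of i "2 * n" E v] that in auto)
  qed
  also have "\<dots> \<le> (\<Sum>\<^sub>\<infinity>w. (c w)\<^sup>2) * (\<integral>t. (p t)\<^sup>2 \<partial>\<nu>)"
    by (intro mult_right_mono finite_sum_le_infsum c T integral_nonneg_AE) auto
  finally show ?thesis .
qed

theorem mainTheorem12:
  fixes E :: "'v \<Rightarrow> 'v \<Rightarrow> bool" and d :: nat and v0 :: 'v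
    and M :: "'a measure" and X :: "'v \<Rightarrow> 'a \<Rightarrow> real"
    and \<nu> \<mu> :: "real measure"
  assumes "infinite (UNIV :: 'v set)"
    and "regular_graph E d"
    and "vertex_transitive E"
    and "finite_borel_on \<nu> (real d)"
    and "\<And>k. (\<integral>t. t ^ k \<partial>\<nu>) = adj_pow_delta E k v0 v0"
    and "prob_space M"
    and "invariant_process M E X"
    and "(\<integral>\<omega>. X v0 \<omega> \<partial>M) = 0"
    and "integrable M (\<lambda>\<omega>. (X v0 \<omega>)\<^sup>2)"
    and "(\<lambda>v. (cov_struct M X v0 v)\<^sup>2) summable_on UNIV"
    and "finite_borel_on \<mu> (real d)"
    and "\<And>k. (\<integral>t. t ^ k \<partial>\<mu>) = (\<integral>\<omega>. proc_pow E k X v0 \<omega> * X v0 \<omega> \<partial>M)"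
  shows "absolutely_continuous \<nu> \<mu>"
proof (rule absolutely_continuous_of_polynomial_bound[OF assms(11,4)])
  fix p :: "real \<Rightarrow> real"
  assume "real_polynomial_function p"
  moreover have "(\<integral>t. t ^ k \<partial>\<mu>)
      = (\<Sum>w | adj_pow_delta E k v0 w \<noteq> 0. adj_pow_delta E k v0 w * cov_struct M X v0 w)" for k
    using assms(12) integral_proc_pow_mult[OF assms(7,3,9,6,8)] by simp
  ultimately show "(\<integral>t. p t \<partial>\<mu>)\<^sup>2 \<le> (\<Sum>\<^sub>\<infinity>w. (cov_struct M X v0 w)\<^sup>2) * (\<integral>t. (p t)\<^sup>2 \<partial>\<nu>)"
    using spectral_polynomial_bound[OF assms(2,11,4,5)] assms(10) by blast
qed

end
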